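(* With notation as in the context, for all $X,Y\in\zeta_s^+(V_0)$ and all $u\in V_0$, $$\int_{V_0}\gamma_X(u-v)\,\gamma_Y(v)\,e^{-\mathrm{i}\,\mathfrak{Im}\langle u,sv\rangle}\,d\mathrm{vol}(v)=\gamma_{X\circ Y}(u),$$ where $X\circ Y=(Y+s)(X+Y)^{-1}(X+s)-s$; the integral converges absolutely.
   Context: $V_0=V_0^+\oplus V_0^-$ is an orthogonal decomposition of a finite-dimensional complex Hermitian space with scalar product $\langle\cdot,\cdot\rangle$ (antilinear in the first argument), $s=\mathrm{Id}_{V_0^+}\oplus(-\mathrm{Id}_{V_0^-})$, $\zeta_s^+(V_0)=\{X\in\mathrm{End}(V_0):\tfrac12(X+X^\dagger)>0,\ \mathrm{Det}(X+s)\ne0\}$. For $X\in\zeta_s^+(V_0)$, $\gamma_X(v)=\mathrm{Det}(X+s)\,e^{-\frac12\langle v,Xv\rangle}$. $d\mathrm{vol}$ is Lebesgue measure on $V_0$ (viewed as a real vector space) normalized by $\int_{V_0}e^{-\frac12\langle v,v\rangle}d\mathrm{vol}(v)=1$. *)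

theory Defs
  imports "HOL-Analysis.Analysis"
begin

text \<open>The Hermitian space V_0 is modelled as complex^'n with the standard scalar product,
  antilinear in the first argument. The orthogonal decomposition V_0 = V_0^+ (+) V_0^- is
  given by a set P of coordinates spanning V_0^+ (the rest span V_0^-).\<close>

definition herm :: "complex^'n \<Rightarrow> complex^'n \<Rightarrow> complex" where
  "herm v w = (\<Sum>i\<in>UNIV. cnj (v $ i) * w $ i)"

definition adj :: "complex^'n^'n \<Rightarrow> complex^'n^'n" where
  "adj X = (\<chi> i j. cnj (X $ j $ i))"

definition sgnmat :: "'n set \<Rightarrow> complex^'n^'n" where
  "sgnmat P = (\<chi> i j. if i = j then (if i \<in> P then 1 else -1) else 0)"

definition posdef :: "complex^'n^'n \<Rightarrow> bool" where
  "posdef H \<longleftrightarrow> adj H = H \<and> (\<forall>v. v \<noteq> 0 \<longrightarrow> Im (herm v (H *v v)) = 0 \<and> Re (herm v (H *v v)) > 0)"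

definition zeta_plus :: "'n set \<Rightarrow> (complex^'n^'n) set" where
  "zeta_plus P = {X. posdef ((1/2) *\<^sub>R (X + adj X)) \<and> det (X + sgnmat P) \<noteq> 0}"

definition gammaX :: "'n set \<Rightarrow> complex^'n^'n \<Rightarrow> complex^'n \<Rightarrow> complex" where
  "gammaX P X v = det (X + sgnmat P) * exp (- (1/2) * herm v (X *v v))"

definition circ :: "'n set \<Rightarrow> complex^'n^'n \<Rightarrow> complex^'n^'n \<Rightarrow> complex^'n^'n" where
  "circ P X Y = (Y + sgnmat P) ** matrix_inv (X + Y) ** (X + sgnmat P) - sgnmat P"

text \<open>Normalisation constant of dvol: dvol = lborel / vol_norm, so that the integral of
  exp(-1/2 <v,v>) w.r.t. dvol equals 1.\<close>
definition vol_norm :: "'n::finite itself \<Rightarrow> complex" where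
  "vol_norm _ = (LINT v|(lborel :: (complex^'n) measure). exp (- (1/2) * herm v v))"

end

theory Submission
  imports Defs "HOL-Complex_Analysis.Complex_Analysis" "HOL-Probability.Probability"
begin

text \<open>After expanding the exponents, the integrand is a constant multiple of the Gaussian
  \<open>exp (- <v, A v> + <p, v> + <v, q>)\<close> with \<open>A = (X + Y) / 2\<close>, whose Hermitian part is
  positive definite. Such a Gaussian is integrated over \<open>complex^n\<close> one coordinate at a time:
  completing the square in the coordinate \<open>k\<close> produces the factor \<open>pi / A k k\<close> and leaves a
  Gaussian in the remaining coordinates whose matrix is the Schur complement, so the factors
  multiply up to \<open>pi^n / det A\<close> and the integral is \<open>pi^n / det A * exp <p, A\<^sup>-\<^sup>1 q>\<close>.
  In one complex variable the integral factors into two real Gaussian integrals with complex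
  coefficients, which follow from the real case by analytic continuation. Finally
  \<open>X \<circ> Y + s = (Y + s) (X + Y)\<^sup>-\<^sup>1 (X + s)\<close> turns the determinant and the exponent into those
  of \<open>gammaX (X \<circ> Y)\<close>, and the normalisation of \<open>dvol\<close> is the case \<open>A = 1/2\<close>.\<close>

section \<open>Gaussian integrals in one variable\<close>

lemma has_bochner_integral_gaussian:
  fixes a b :: real
  assumes "a > 0"
  shows "has_bochner_integral lborel (\<lambda>x. exp (- a * x\<^sup>2 / 2 + b * x))
           (sqrt (2 * pi / a) * exp (b\<^sup>2 / (2 * a)))"
proof -
  have density: "exp (- a * x\<^sup>2 / 2 + b * x)
      = sqrt (2 * pi / a) * exp (b\<^sup>2 / (2 * a)) * normal_density (b / a) (1 / sqrt a) x" for x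
  proof -
    have "normal_density (b / a) (1 / sqrt a) x = 1 / sqrt (2 * pi / a) * exp (- (x - b / a)\<^sup>2 * a / 2)"
      using assms by (simp add: normal_density_def power_divide real_sqrt_divide)
    moreover have "- (x - b / a)\<^sup>2 * a / 2 = (- a * x\<^sup>2 / 2 + b * x) - b\<^sup>2 / (2 * a)"
      using assms by (simp add: field_simps power2_eq_square)
    ultimately show ?thesis
      using assms by (simp add: exp_diff)
  qed
  have "has_bochner_integral lborel (normal_density (b / a) (1 / sqrt a)) 1"
    using assms by (simp add: has_bochner_integral_iff integrable_normal_density integral_normal_density)
  from has_bochner_integral_mult_right[OF this] show ?thesis
    unfolding density by simp
qed

lemma integrable_gaussian:
  fixes a b :: real
  assumes "a > 0"
  shows "integrable lborel (\<lambda>x. exp (- a * x\<^sup>2 / 2 + b * x))"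
  using has_bochner_integral_gaussian[OF assms, of b] by (rule integrable.intros)

lemma integrable_gaussian_times_exp_abs:
  fixes a b r :: real
  assumes "a > 0"
  shows "integrable lborel (\<lambda>x. exp (- a * x\<^sup>2 / 2 + b * x) * exp (r * \<bar>x\<bar>))"
proof (rule Bochner_Integration.integrable_bound)
  show "integrable lborel (\<lambda>x. exp (- a * x\<^sup>2 / 2 + (b + r) * x) + exp (- a * x\<^sup>2 / 2 + (b - r) * x))"
    using integrable_gaussian[OF assms] by (intro Bochner_Integration.integrable_add)
  have "exp (- a * x\<^sup>2 / 2 + b * x) * exp (r * \<bar>x\<bar>)
     \<le> exp (- a * x\<^sup>2 / 2 + (b + r) * x) + exp (- a * x\<^sup>2 / 2 + (b - r) * x)" for x
    unfolding exp_add[symmetric]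
    by (cases "x \<ge> 0") (auto simp: algebra_simps add_increasing add_increasing2)
  then show "AE x in lborel. norm (exp (- a * x\<^sup>2 / 2 + b * x) * exp (r * \<bar>x\<bar>))
     \<le> norm (exp (- a * x\<^sup>2 / 2 + (b + r) * x) + exp (- a * x\<^sup>2 / 2 + (b - r) * x))"
    by simp
qed measurable

lemma sum_power_div_fact_le_exp:
  fixes x :: real
  assumes "0 \<le> x"
  shows "(\<Sum>n<N. x ^ n / fact n) \<le> exp x"
proof -
  have "(\<Sum>n<N. x ^ n / fact n) \<le> (\<Sum>n. x ^ n / fact n)"
    using summable_exp[of x] assms by (intro sum_le_suminf) (auto simp: divide_inverse mult.commute)
  also have "\<dots> = exp x"
    by (simp add: exp_def field_simps)
  finally show ?thesis .
qed

lemma norm_exp_series_le: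
  fixes h z :: complex
  assumes "norm h \<le> r"
  shows "norm ((h * z) ^ n / fact n) \<le> exp (r * norm z)"
    and "norm (\<Sum>n<N. (h * z) ^ n / fact n) \<le> exp (r * norm z)"
proof -
  have sum_le: "(\<Sum>n<N. norm ((h * z) ^ n / fact n)) \<le> exp (r * norm z)" for N
  proof -
    have "(\<Sum>n<N. norm ((h * z) ^ n / fact n)) = (\<Sum>n<N. (norm h * norm z) ^ n / fact n)"
      by (simp add: norm_mult norm_power norm_divide norm_fact power_mult_distrib)
    also have "\<dots> \<le> exp (norm h * norm z)"
      by (intro sum_power_div_fact_le_exp) auto
    also have "\<dots> \<le> exp (r * norm z)"
      using assms by (intro exp_mono mult_right_mono) auto
    finally show ?thesis .
  qed
  show "norm ((h * z) ^ n / fact n) \<le> exp (r * norm z)"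
    by (rule order_trans[OF _ sum_le[of "Suc n"]]) (simp add: sum_nonneg)
  show "norm (\<Sum>n<N. (h * z) ^ n / fact n) \<le> exp (r * norm z)"
    by (rule order_trans[OF norm_sum sum_le])
qed

lemma sums_integral_times_exp:
  fixes g \<phi> :: "'a \<Rightarrow> complex"
  assumes [measurable]: "g \<in> borel_measurable M" "\<phi> \<in> borel_measurable M"
    and dominated: "integrable M (\<lambda>x. norm (g x) * exp (r * norm (\<phi> x)))"
    and "norm h < r"
  shows "(\<lambda>n. ((LINT x|M. g x * \<phi> x ^ n) / fact n) * h ^ n) sums (LINT x|M. g x * exp (h * \<phi> x))"
proof -
  let ?w = "\<lambda>x. norm (g x) * exp (r * norm (\<phi> x))"
  define s where "s N x = (\<Sum>n<N. g x * ((h * \<phi> x) ^ n / fact n))" for N x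
  note bounds = norm_exp_series_le[OF less_imp_le[OF \<open>norm h < r\<close>]]
  have term_integrable: "integrable M (\<lambda>x. g x * ((h * \<phi> x) ^ n / fact n))" for n
  proof (rule Bochner_Integration.integrable_bound[OF dominated])
    have "norm (g x * ((h * \<phi> x) ^ n / fact n)) \<le> ?w x" for x
      unfolding norm_mult by (intro mult_left_mono bounds(1)) simp
    then show "AE x in M. norm (g x * ((h * \<phi> x) ^ n / fact n)) \<le> norm (?w x)"
      by simp
  qed measurable
  have partial_bound: "norm (s N x) \<le> ?w x" for N x
    unfolding s_def sum_distrib_left[symmetric] norm_mult by (intro mult_left_mono bounds(2)) simp
  have "(\<lambda>N. s N x) \<longlonglongrightarrow> g x * exp (h * \<phi> x)" for x
  proof -
    have "(\<lambda>n. g x * ((h * \<phi> x) ^ n /\<^sub>R fact n)) sums (g x * exp (h * \<phi> x))"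
      by (intro sums_mult exp_converges)
    then show ?thesis
      unfolding sums_def s_def by (simp add: scaleR_conv_of_real divide_inverse mult.commute)
  qed
  then have "(\<lambda>N. LINT x|M. s N x) \<longlonglongrightarrow> (LINT x|M. g x * exp (h * \<phi> x))"
    using dominated partial_bound
    by (intro integral_dominated_convergence[where w="?w"]) (auto simp: s_def)
  moreover have "(LINT x|M. s N x) = (\<Sum>n<N. ((LINT x|M. g x * \<phi> x ^ n) / fact n) * h ^ n)" for N
  proof -
    have "(LINT x|M. s N x) = (\<Sum>n<N. LINT x|M. g x * ((h * \<phi> x) ^ n / fact n))"
      unfolding s_def using term_integrable by (intro Bochner_Integration.integral_sum)
    also have "\<dots> = (\<Sum>n<N. (h ^ n / fact n) * (LINT x|M. g x * \<phi> x ^ n))"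
      by (simp only: power_mult_distrib times_divide_eq_right times_divide_eq_left
          mult.left_commute[of "g _"] integral_divide_zero integral_mult_right_zero)
    finally show ?thesis
      by (simp add: mult.commute)
  qed
  ultimately show ?thesis
    unfolding sums_def by simp
qed

lemma holomorphic_on_integral_times_exp:
  fixes g \<phi> :: "'a \<Rightarrow> complex"
  assumes "g \<in> borel_measurable M" "\<phi> \<in> borel_measurable M"
    and "integrable M (\<lambda>x. norm (g x) * exp (r * norm (\<phi> x)))"
  shows "(\<lambda>z. LINT x|M. g x * exp ((z - z0) * \<phi> x)) holomorphic_on ball z0 r"
  by (rule power_series_holomorphic[where a="\<lambda>n. (LINT x|M. g x * \<phi> x ^ n) / fact n"])
     (use sums_integral_times_exp[OF assms] in \<open>simp add: dist_norm norm_minus_commute\<close>)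

definition gauss_exp :: "complex \<Rightarrow> complex \<Rightarrow> real \<Rightarrow> complex" where
  "gauss_exp a b x = exp (- a / 2 * (of_real x)\<^sup>2 + b * of_real x)"

definition gauss_integral :: "complex \<Rightarrow> complex \<Rightarrow> complex" where
  "gauss_integral a b = (LINT x|lborel. gauss_exp a b x)"

lemma gauss_exp_measurable [measurable]: "gauss_exp a b \<in> borel_measurable borel"
  unfolding gauss_exp_def by measurable

lemma norm_gauss_exp: "norm (gauss_exp a b x) = exp (- Re a * x\<^sup>2 / 2 + Re b * x)"
  unfolding gauss_exp_def norm_exp_eq_Re by (simp add: power2_eq_square)

lemma integrable_gauss_exp:
  assumes "Re a > 0"
  shows "integrable lborel (gauss_exp a b)"
proof (rule Bochner_Integration.integrable_bound[OF integrable_gaussian[OF assms, of "Re b"]])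
  show "AE x in lborel. norm (gauss_exp a b x) \<le> norm (exp (- Re a * x\<^sup>2 / 2 + Re b * x))"
    by (simp add: norm_gauss_exp)
qed measurable

lemma holomorphic_eq_if_eq_on_reals:
  fixes f g :: "complex \<Rightarrow> complex"
  assumes "f holomorphic_on S" "g holomorphic_on S" "open S" "connected S" "of_real r \<in> S"
    and eq: "\<And>t. of_real t \<in> S \<Longrightarrow> f (of_real t) = g (of_real t)"
    and "z \<in> S"
  shows "f z = g z"
proof -
  have limpt: "of_real r islimpt (S \<inter> \<real>)"
  proof (rule islimptI)
    fix T :: "complex set"
    assume "of_real r \<in> T" "open T"
    with assms(3,5) obtain e where "e > 0" "ball (of_real r) e \<subseteq> T \<inter> S"
      by (meson IntI open_Int openE)
    moreover have "(of_real (r + e / 2) :: complex) \<in> ball (of_real r) e"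
      using \<open>e > 0\<close> by (simp add: dist_norm)
    ultimately show "\<exists>y\<in>S \<inter> \<real>. y \<in> T \<and> y \<noteq> of_real r"
      by (intro bexI[of _ "of_real (r + e / 2)"]) auto
  qed
  have "f z - g z = 0"
  proof (rule analytic_continuation[where f="\<lambda>z. f z - g z" and U="S \<inter> \<real>" and \<xi>="of_real r"])
    show "f w - g w = 0" if "w \<in> S \<inter> \<real>" for w
      using that eq by (auto elim!: Reals_cases)
  qed (use assms limpt in \<open>auto intro: holomorphic_intros\<close>)
  then show ?thesis
    by simp
qed

lemma gauss_integral_of_real:
  fixes a :: real and b :: complex
  assumes "a > 0"
  shows "gauss_integral (of_real a) b = sqrt (2 * pi / a) * exp (b\<^sup>2 / (2 * a))"
proof -
  let ?S = "ball 0 (norm b + 1)"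
  let ?g = "\<lambda>b::complex. sqrt (2 * pi / a) * exp (b\<^sup>2 / (2 * a))"
  have "(\<lambda>z. LINT x|lborel. gauss_exp (of_real a) 0 x * exp ((z - 0) * of_real x)) holomorphic_on ?S"
    using integrable_gaussian_times_exp_abs[OF assms, of 0 "norm b + 1"]
    by (intro holomorphic_on_integral_times_exp) (auto simp: norm_gauss_exp)
  moreover have "gauss_exp (of_real a) 0 x * exp ((z - 0) * of_real x) = gauss_exp (of_real a) z x" for z x
    by (simp add: gauss_exp_def exp_add[symmetric])
  ultimately have holo: "(\<lambda>b. gauss_integral (of_real a) b) holomorphic_on ?S"
    by (simp add: gauss_integral_def)
  have real_case: "gauss_integral (of_real a) (of_real t) = ?g (of_real t)" for t :: real
  proof -
    have "gauss_exp (of_real a) (of_real t) x = of_real (exp (- a * x\<^sup>2 / 2 + t * x))" for x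
      by (simp add: gauss_exp_def exp_of_real[symmetric] algebra_simps)
    then have "gauss_integral (of_real a) (of_real t) = of_real (LINT x|lborel. exp (- a * x\<^sup>2 / 2 + t * x))"
      by (simp add: gauss_integral_def)
    also have "\<dots> = of_real (sqrt (2 * pi / a) * exp (t\<^sup>2 / (2 * a)))"
      using has_bochner_integral_gaussian[OF assms, of t] by (simp add: has_bochner_integral_integral_eq)
    finally show ?thesis
      by (simp add: exp_of_real[symmetric])
  qed
  show ?thesis
  proof (rule holomorphic_eq_if_eq_on_reals[OF holo, where g="?g" and r=0])
    show "?g holomorphic_on ?S"
      using assms by (intro holomorphic_intros) auto
  qed (auto simp: real_case intro: add_nonneg_pos)
qed

lemma holomorphic_gauss_integral: "(\<lambda>a. gauss_integral a b) holomorphic_on {a. Re a > 0}"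
proof -
  have "(\<lambda>a. gauss_integral a b) holomorphic_on ball a0 (Re a0 / 2)" if "Re a0 > 0" for a0
  proof -
    have "norm (gauss_exp a0 b x) * exp (Re a0 / 2 * norm (- (complex_of_real x)\<^sup>2 / 2))
        = exp (- (Re a0 / 2) * x\<^sup>2 / 2 + Re b * x)" for x
      by (simp add: norm_gauss_exp norm_power exp_add[symmetric] algebra_simps)
    then have "(\<lambda>z. LINT x|lborel. gauss_exp a0 b x * exp ((z - a0) * (- (of_real x)\<^sup>2 / 2)))
                 holomorphic_on ball a0 (Re a0 / 2)"
      using integrable_gaussian[of "Re a0 / 2" "Re b"] that
      by (intro holomorphic_on_integral_times_exp) auto
    moreover have "gauss_exp a0 b x * exp ((z - a0) * (- (of_real x)\<^sup>2 / 2)) = gauss_exp z b x" for z x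
      unfolding gauss_exp_def exp_add[symmetric] by (rule arg_cong[where f=exp]) (simp add: field_simps)
    ultimately show ?thesis
      by (simp add: gauss_integral_def)
  qed
  then have "(\<lambda>a. gauss_integral a b) analytic_on {a. Re a > 0}"
    unfolding analytic_on_def by (metis half_gt_zero mem_Collect_eq)
  then show ?thesis
    by (rule analytic_imp_holomorphic)
qed

lemma gauss_integral_mult:
  fixes a b c :: complex
  assumes "Re a > 0"
  shows "gauss_integral a b * gauss_integral a c = 2 * pi / a * exp ((b\<^sup>2 + c\<^sup>2) / (2 * a))"
proof -
  let ?f = "\<lambda>a. gauss_integral a b * gauss_integral a c"
  let ?g = "\<lambda>a::complex. 2 * pi / a * exp ((b\<^sup>2 + c\<^sup>2) / (2 * a))"
  have real_case: "?f (of_real t) = ?g (of_real t)" if "t > 0" for t :: real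
  proof -
    have sqrt_sq: "complex_of_real (sqrt (2 * pi / t)) * complex_of_real (sqrt (2 * pi / t)) = of_real (2 * pi / t)"
      unfolding of_real_mult[symmetric] using that by simp
    have "?f (of_real t) = (complex_of_real (sqrt (2 * pi / t)) * complex_of_real (sqrt (2 * pi / t)))
        * (exp (b\<^sup>2 / (2 * t)) * exp (c\<^sup>2 / (2 * t)))"
      using that by (simp only: gauss_integral_of_real ac_simps)
    also have "\<dots> = ?g (of_real t)"
      unfolding sqrt_sq by (simp add: exp_add[symmetric] add_divide_distrib)
    finally show ?thesis .
  qed
  have "?f holomorphic_on {a. Re a > 0}"
    using holomorphic_gauss_integral by (intro holomorphic_intros)
  moreover have "?g holomorphic_on {a. Re a > 0}"
    by (intro holomorphic_intros) auto
  ultimately show ?thesis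
    by (rule holomorphic_eq_if_eq_on_reals[where r=1]) (use assms real_case in \<open>auto simp: open_halfspace_Re_gt\<close>)
qed

lemma cnj_measurable [measurable]: "cnj \<in> borel_measurable borel"
  by (intro borel_measurable_continuous_onI continuous_intros)

interpretation product_lborel: product_sigma_finite "\<lambda>_. lborel :: 'a::euclidean_space measure"
  by unfold_locales

lemma has_bochner_integral_gaussian_complex:
  fixes a p q :: complex
  assumes "Re a > 0"
  shows "has_bochner_integral lborel (\<lambda>t. exp (- a * (cnj t * t) + p * t + q * cnj t))
           (pi / a * exp (p * q / a))"
proof -
  define F where "F t = exp (- a * (cnj t * t) + p * t + q * cnj t)" for t
  define T where "T f = of_real (f 1) + \<i> * of_real (f \<i>)" for f :: "complex \<Rightarrow> real"
  \<comment> \<open>For \<open>t = x + \<i> y\<close> the integrand factors into a Gaussian in \<open>x\<close> and one in \<open>y\<close>.\<close>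
  define h where "h b = (if b = 1 then gauss_exp (2 * a) (p + q) else gauss_exp (2 * a) (\<i> * (p - q)))"
    for b :: complex
  have [measurable]: "T \<in> borel_measurable (\<Pi>\<^sub>M b\<in>Basis. lborel)" "F \<in> borel_measurable borel"
    unfolding T_def F_def by measurable
  have h_integrable: "integrable lborel (h b)" for b
    using assms by (simp add: h_def integrable_gauss_exp)
  have F_T: "F (T f) = (\<Prod>b\<in>Basis. h b (f b))" for f
  proof -
    have "(\<Prod>b\<in>Basis. h b (f b)) = gauss_exp (2 * a) (p + q) (f 1) * gauss_exp (2 * a) (\<i> * (p - q)) (f \<i>)"
      by (simp add: Basis_complex_def h_def)
    also have "\<dots> = F (T f)"
      unfolding gauss_exp_def F_def T_def exp_add[symmetric]
      by (rule arg_cong[where f=exp]) (simp add: algebra_simps power2_eq_square)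
    finally show ?thesis
      by simp
  qed
  have lborel_T: "lborel = distr (\<Pi>\<^sub>M b\<in>Basis. lborel) borel T"
    unfolding T_def using lborel_eq[where 'a=complex]
    by (simp add: Basis_complex_def scaleR_conv_of_real mult.commute)
  have "integrable (\<Pi>\<^sub>M b\<in>Basis. lborel) (\<lambda>f. F (T f))"
    unfolding F_T using h_integrable by (intro product_lborel.product_integrable_prod) auto
  then have integrable: "integrable lborel F"
    by (subst lborel_T) (simp add: integrable_distr_eq)
  have "(LINT t|lborel. F t) = (LINT f|(\<Pi>\<^sub>M b\<in>Basis. lborel). F (T f))"
    by (subst lborel_T) (simp add: integral_distr)
  also have "\<dots> = (\<Prod>b\<in>Basis. LINT x|lborel. h b x)"
    unfolding F_T using h_integrable by (intro product_lborel.product_integral_prod) auto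
  also have "\<dots> = gauss_integral (2 * a) (p + q) * gauss_integral (2 * a) (\<i> * (p - q))"
    by (simp add: Basis_complex_def h_def gauss_integral_def)
  also have "\<dots> = 2 * pi / (2 * a) * exp (((p + q)\<^sup>2 + (\<i> * (p - q))\<^sup>2) / (2 * (2 * a)))"
    using assms by (intro gauss_integral_mult) simp
  also have "\<dots> = pi / a * exp (p * q / a)"
    using assms by (auto simp: power2_eq_square field_simps intro!: arg_cong[where f=exp])
  finally have "has_bochner_integral lborel F (pi / a * exp (p * q / a))"
    using integrable by (simp add: has_bochner_integral_iff)
  then show ?thesis
    by (simp add: F_def[abs_def])
qed

section \<open>Integrating out one coordinate\<close>

text \<open>Vectors and matrices on a finite set \<open>I\<close> of coordinates are functions on the ambient
  index type, so that coordinates can be integrated out one at a time.\<close>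

definition qform :: "'n set \<Rightarrow> ('n \<Rightarrow> 'n \<Rightarrow> complex) \<Rightarrow> ('n \<Rightarrow> complex) \<Rightarrow> complex" where
  "qform I A v = (\<Sum>i\<in>I. \<Sum>j\<in>I. cnj (v i) * A i j * v j)"

definition lform :: "'n set \<Rightarrow> ('n \<Rightarrow> complex) \<Rightarrow> ('n \<Rightarrow> complex) \<Rightarrow> complex" where
  "lform I w v = (\<Sum>i\<in>I. cnj (w i) * v i)"

definition gauss_kernel ::
    "'n set \<Rightarrow> ('n \<Rightarrow> 'n \<Rightarrow> complex) \<Rightarrow> ('n \<Rightarrow> complex) \<Rightarrow> ('n \<Rightarrow> complex) \<Rightarrow> ('n \<Rightarrow> complex) \<Rightarrow> complex" where
  "gauss_kernel I A p q v = exp (- qform I A v + lform I p v + lform I v q)"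

definition re_posdef :: "'n set \<Rightarrow> ('n \<Rightarrow> 'n \<Rightarrow> complex) \<Rightarrow> bool" where
  "re_posdef I A \<longleftrightarrow> (\<forall>v. (\<exists>i\<in>I. v i \<noteq> 0) \<longrightarrow> Re (qform I A v) > 0)"

definition herm_part :: "('n \<Rightarrow> 'n \<Rightarrow> complex) \<Rightarrow> ('n \<Rightarrow> 'n \<Rightarrow> complex)" where
  "herm_part A = (\<lambda>i j. (A i j + cnj (A j i)) / 2)"

text \<open>Eliminating the coordinate \<open>k\<close> replaces \<open>A\<close> by its Schur complement and shifts the
  linear terms by the row and the column \<open>k\<close> of \<open>A\<close>.\<close>

definition schur_compl :: "('n \<Rightarrow> 'n \<Rightarrow> complex) \<Rightarrow> 'n \<Rightarrow> ('n \<Rightarrow> 'n \<Rightarrow> complex)" where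
  "schur_compl A k = (\<lambda>i j. A i j - A i k * A k j / A k k)"

definition schur_row :: "('n \<Rightarrow> 'n \<Rightarrow> complex) \<Rightarrow> 'n \<Rightarrow> ('n \<Rightarrow> complex) \<Rightarrow> ('n \<Rightarrow> complex)" where
  "schur_row A k p = (\<lambda>j. p j - cnj (A k j) * p k / cnj (A k k))"

definition schur_col :: "('n \<Rightarrow> 'n \<Rightarrow> complex) \<Rightarrow> 'n \<Rightarrow> ('n \<Rightarrow> complex) \<Rightarrow> ('n \<Rightarrow> complex)" where
  "schur_col A k q = (\<lambda>i. q i - A i k * q k / A k k)"

lemma qform_insert:
  fixes A :: "'n \<Rightarrow> 'n \<Rightarrow> complex"
  assumes "finite I" "k \<notin> I"
  shows "qform (insert k I) A (v(k := t)) = A k k * (cnj t * t) + cnj t * (\<Sum>j\<in>I. A k j * v j)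
           + (\<Sum>i\<in>I. cnj (v i) * A i k) * t + qform I A v"
proof -
  have "qform (insert k I) A w = A k k * (cnj (w k) * w k) + cnj (w k) * (\<Sum>j\<in>I. A k j * w j)
      + (\<Sum>i\<in>I. cnj (w i) * A i k) * w k + qform I A w" for w
    using assms unfolding qform_def
    by (simp add: sum.distrib sum_distrib_left sum_distrib_right algebra_simps)
  moreover have "(v(k := t)) i = v i" if "i \<in> I" for i
    using that assms by auto
  ultimately show ?thesis
    unfolding qform_def by (simp cong: sum.cong)
qed

lemma lform_insert_left:
  assumes "finite I" "k \<notin> I"
  shows "lform (insert k I) (v(k := t)) q = cnj t * q k + lform I v q"
  using assms unfolding lform_def by (simp add: sum.insert) (intro sum.cong, auto)

lemma lform_insert_right:
  assumes "finite I" "k \<notin> I"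
  shows "lform (insert k I) p (v(k := t)) = cnj (p k) * t + lform I p v"
  using assms unfolding lform_def by (simp add: sum.insert) (intro sum.cong, auto)

lemma lform_swap: "lform I w v = cnj (lform I v w)"
  unfolding lform_def by (simp add: mult.commute)

lemma qform_schur_compl:
  "qform I (schur_compl A k) v
     = qform I A v - (\<Sum>i\<in>I. cnj (v i) * A i k) * (\<Sum>j\<in>I. A k j * v j) / A k k"
proof -
  have "qform I (schur_compl A k) v
      = (\<Sum>i\<in>I. \<Sum>j\<in>I. cnj (v i) * A i j * v j - cnj (v i) * A i k * (A k j * v j) / A k k)"
    unfolding qform_def schur_compl_def by (intro sum.cong refl) (simp add: ring_distribs)
  also have "\<dots> = qform I A v - (\<Sum>i\<in>I. \<Sum>j\<in>I. cnj (v i) * A i k * (A k j * v j)) / A k k"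
    unfolding qform_def by (simp add: sum_subtractf sum_divide_distrib)
  finally show ?thesis
    by (simp only: sum_product)
qed

lemma lform_schur_row:
  "lform I (schur_row A k p) v = lform I p v - cnj (p k) / A k k * (\<Sum>j\<in>I. A k j * v j)"
  unfolding lform_def schur_row_def
  by (simp add: sum_subtractf sum_distrib_left ring_distribs mult.commute mult.left_commute)

lemma lform_schur_col:
  "lform I v (schur_col A k q) = lform I v q - q k / A k k * (\<Sum>i\<in>I. cnj (v i) * A i k)"
  unfolding lform_def schur_col_def
  by (simp add: sum_subtractf sum_distrib_left ring_distribs mult.commute mult.left_commute)

lemma schur_compl_solution:
  fixes A :: "'n \<Rightarrow> 'n \<Rightarrow> complex"
  assumes "finite I" "k \<notin> I" "A k k \<noteq> 0"
    and solution: "\<forall>i\<in>insert k I. (\<Sum>j\<in>insert k I. A i j * y j) = q i"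
  shows "\<forall>i\<in>I. (\<Sum>j\<in>I. schur_compl A k i j * y j) = schur_col A k q i"
proof
  fix i
  assume "i \<in> I"
  have row: "(\<Sum>j\<in>I. A l j * y j) = q l - A l k * y k" if "l \<in> insert k I" for l
    using solution that assms(1,2) by (auto simp: algebra_simps)
  have "(\<Sum>j\<in>I. schur_compl A k i j * y j)
      = (\<Sum>j\<in>I. A i j * y j) - A i k / A k k * (\<Sum>j\<in>I. A k j * y j)"
    unfolding schur_compl_def by (simp add: sum_subtractf sum_distrib_left algebra_simps)
  also have "\<dots> = schur_col A k q i"
    unfolding row[OF insertI1] row[OF insertI2[OF \<open>i \<in> I\<close>]] schur_col_def
    using assms(3) by (simp add: field_simps)
  finally show "(\<Sum>j\<in>I. schur_compl A k i j * y j) = schur_col A k q i" .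
qed

lemma lform_schur_row_solution:
  fixes A :: "'n \<Rightarrow> 'n \<Rightarrow> complex"
  assumes "finite I" "k \<notin> I" "A k k \<noteq> 0" and "(\<Sum>j\<in>insert k I. A k j * y j) = q k"
  shows "cnj (p k) * q k / A k k + lform I (schur_row A k p) y = lform (insert k I) p y"
proof -
  have "(\<Sum>j\<in>I. A k j * y j) = q k - A k k * y k"
    using assms(1,2,4) by (simp add: algebra_simps)
  then have "lform I (schur_row A k p) y = lform I p y - cnj (p k) / A k k * (q k - A k k * y k)"
    by (simp only: lform_schur_row)
  moreover have "lform (insert k I) p y = cnj (p k) * y k + lform I p y"
    using assms(1,2) by (simp add: lform_def)
  ultimately show ?thesis
    using assms(3) by (simp add: field_simps)
qed

lemma qform_herm_part: "qform I (herm_part A) v = of_real (Re (qform I A v))"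
proof -
  have "cnj (qform I A v) = (\<Sum>j\<in>I. \<Sum>i\<in>I. cnj (v i) * cnj (A j i) * v j)"
    unfolding qform_def by (simp add: ac_simps)
  also have "\<dots> = (\<Sum>i\<in>I. \<Sum>j\<in>I. cnj (v i) * cnj (A j i) * v j)"
    by (rule sum.swap)
  finally have "qform I (herm_part A) v = (qform I A v + cnj (qform I A v)) / 2"
    unfolding qform_def herm_part_def
    by (simp add: sum.distrib[symmetric] sum_divide_distrib ring_distribs add_divide_distrib)
  then show ?thesis
    by (simp add: complex_add_cnj)
qed

lemma re_posdef_herm_part: "re_posdef I (herm_part A) \<longleftrightarrow> re_posdef I A"
  unfolding re_posdef_def qform_herm_part by simp

lemma norm_gauss_kernel:
  "gauss_kernel I (herm_part A) (\<lambda>i. (p i + q i) / 2) (\<lambda>i. (p i + q i) / 2) v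
     = of_real (norm (gauss_kernel I A p q v))"
proof -
  let ?m = "\<lambda>i. (p i + q i) / 2"
  have mean: "lform I ?m v = (lform I p v + lform I q v) / 2"
    unfolding lform_def by (simp add: sum.distrib[symmetric] sum_divide_distrib ring_distribs add_divide_distrib)
  have "lform I ?m v + lform I v ?m = of_real (2 * Re (lform I ?m v))"
    by (simp add: lform_swap[of I v] complex_add_cnj)
  also have "\<dots> = of_real (Re (lform I p v + lform I v q))"
    unfolding mean by (simp add: lform_swap[of I v q])
  finally have "lform I ?m v + lform I v ?m = of_real (Re (lform I p v + lform I v q))" .
  then have "- qform I (herm_part A) v + lform I ?m v + lform I v ?m
      = of_real (Re (- qform I A v + lform I p v + lform I v q))"
    unfolding qform_herm_part by simp
  then show ?thesis
    unfolding gauss_kernel_def norm_exp_eq_Re by (simp only: exp_of_real)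
qed

lemma gauss_kernel_insert:
  assumes "finite I" "k \<notin> I"
  shows "gauss_kernel (insert k I) A p q (v(k := t)) =
    exp (- A k k * (cnj t * t) + (cnj (p k) - (\<Sum>i\<in>I. cnj (v i) * A i k)) * t
         + (q k - (\<Sum>j\<in>I. A k j * v j)) * cnj t) * gauss_kernel I A p q v"
  unfolding gauss_kernel_def qform_insert[OF assms] lform_insert_left[OF assms]
    lform_insert_right[OF assms] exp_add[symmetric]
  by (rule arg_cong[where f=exp]) (simp add: algebra_simps)

lemma gauss_kernel_schur_compl:
  fixes A :: "'n \<Rightarrow> 'n \<Rightarrow> complex"
  assumes "A k k \<noteq> 0"
  shows "exp ((cnj (p k) - (\<Sum>i\<in>I. cnj (v i) * A i k)) * (q k - (\<Sum>j\<in>I. A k j * v j)) / A k k)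
           * gauss_kernel I A p q v
       = exp (cnj (p k) * q k / A k k) * gauss_kernel I (schur_compl A k) (schur_row A k p) (schur_col A k q) v"
  unfolding gauss_kernel_def exp_add[symmetric] qform_schur_compl lform_schur_row lform_schur_col
  by (rule arg_cong[where f=exp]) (use assms in \<open>simp add: field_simps\<close>)

lemma re_posdef_diag:
  fixes A :: "'n \<Rightarrow> 'n \<Rightarrow> complex"
  assumes "finite I" "re_posdef I A" "k \<in> I"
  shows "Re (A k k) > 0"
proof -
  define e where "e i = (if i = k then 1 else 0 :: complex)" for i
  have row: "(\<Sum>j\<in>I. cnj (e i) * A i j * e j) = cnj (e i) * A i k" for i
  proof -
    have "(\<Sum>j\<in>I. cnj (e i) * A i j * e j) = (\<Sum>j\<in>I. if j = k then cnj (e i) * A i k else 0)"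
      by (intro sum.cong refl) (auto simp: e_def)
    then show ?thesis
      using assms by (simp add: sum.delta)
  qed
  have "qform I A e = (\<Sum>i\<in>I. if i = k then A k k else 0)"
    unfolding qform_def row by (intro sum.cong refl) (auto simp: e_def)
  then have "qform I A e = A k k"
    using assms by (simp add: sum.delta)
  moreover have "\<exists>i\<in>I. e i \<noteq> 0"
    using assms by (auto simp: e_def)
  ultimately show ?thesis
    using assms unfolding re_posdef_def by metis
qed

lemma re_posdef_schur_compl:
  fixes A :: "'n \<Rightarrow> 'n \<Rightarrow> complex"
  assumes "finite I" "k \<notin> I" "re_posdef (insert k I) A"
  shows "re_posdef I (schur_compl A k)"
  unfolding re_posdef_def
proof (intro allI impI)
  fix v :: "'n \<Rightarrow> complex"
  assume nonzero: "\<exists>i\<in>I. v i \<noteq> 0"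
  have "A k k \<noteq> 0"
    using re_posdef_diag[OF _ assms(3)] assms(1) by fastforce
  define t where "t = - (\<Sum>j\<in>I. A k j * v j) / A k k"
  have "qform I (schur_compl A k) v = qform (insert k I) A (v(k := t))"
    unfolding qform_insert[OF assms(1,2)] qform_schur_compl t_def
    using \<open>A k k \<noteq> 0\<close> by (simp add: field_simps)
  moreover have "\<exists>i\<in>insert k I. (v(k := t)) i \<noteq> 0"
    using nonzero assms(2) by auto
  ultimately show "Re (qform I (schur_compl A k) v) > 0"
    using assms(3) unfolding re_posdef_def by metis
qed

abbreviation lborel_Pi :: "'n set \<Rightarrow> ('n \<Rightarrow> complex) measure" where
  "lborel_Pi I \<equiv> \<Pi>\<^sub>M i\<in>I. (lborel :: complex measure)"

lemma gauss_kernel_measurable: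
  assumes "I \<subseteq> J"
  shows "gauss_kernel I A p q \<in> borel_measurable (lborel_Pi J)"
proof -
  have [measurable]: "(\<lambda>v. v i) \<in> borel_measurable (lborel_Pi J)" if "i \<in> I" for i
    using measurable_component_singleton[of i J] that assms by auto
  show ?thesis
    unfolding gauss_kernel_def qform_def lform_def by measurable
qed

lemma gauss_kernel_empty: "gauss_kernel {} A p q v = 1"
  by (simp add: gauss_kernel_def qform_def lform_def)

lemma has_bochner_integral_gauss_kernel_insert:
  fixes A :: "'n \<Rightarrow> 'n \<Rightarrow> complex"
  assumes "finite I" "k \<notin> I" "Re (A k k) > 0"
  shows "has_bochner_integral lborel (\<lambda>t. gauss_kernel (insert k I) A p q (v(k := t)))
    (pi / A k k * exp (cnj (p k) * q k / A k k)
       * gauss_kernel I (schur_compl A k) (schur_row A k p) (schur_col A k q) v)"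
proof -
  let ?P = "cnj (p k) - (\<Sum>i\<in>I. cnj (v i) * A i k)"
  let ?Q = "q k - (\<Sum>j\<in>I. A k j * v j)"
  have "has_bochner_integral lborel (\<lambda>t. gauss_kernel (insert k I) A p q (v(k := t)))
      (pi / A k k * exp (?P * ?Q / A k k) * gauss_kernel I A p q v)"
    unfolding gauss_kernel_insert[OF assms(1,2)] using assms(3)
    by (intro has_bochner_integral_mult_left has_bochner_integral_gaussian_complex)
  moreover have "exp (?P * ?Q / A k k) * gauss_kernel I A p q v
      = exp (cnj (p k) * q k / A k k) * gauss_kernel I (schur_compl A k) (schur_row A k p) (schur_col A k q) v"
    using assms(3) by (intro gauss_kernel_schur_compl) auto
  ultimately show ?thesis
    by (simp only: mult.assoc)
qed

lemma nn_integral_norm_eq_norm_integral: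
  fixes f :: "'a \<Rightarrow> complex" and g :: "'a \<Rightarrow> real"
  assumes "integrable M f" and "\<And>x. f x = of_real (g x)" and "\<And>x. g x \<ge> 0"
  shows "(\<integral>\<^sup>+x. norm (f x) \<partial>M) = ennreal (norm (integral\<^sup>L M f))"
proof -
  have "f = (\<lambda>x. of_real (g x))"
    using assms(2) by auto
  with assms(1) have "integrable M g"
    by (simp add: complex_of_real_integrable_eq)
  have "(\<integral>\<^sup>+x. norm (f x) \<partial>M) = (\<integral>\<^sup>+x. ennreal (g x) \<partial>M)"
    using assms(2,3) by (intro nn_integral_cong) simp
  also have "\<dots> = ennreal (integral\<^sup>L M g)"
    using \<open>integrable M g\<close> assms(3) by (intro nn_integral_eq_integral) auto
  also have "integral\<^sup>L M g = norm (integral\<^sup>L M f)"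
    using \<open>f = _\<close> assms(3) by (simp add: integral_nonneg)
  finally show ?thesis .
qed

text \<open>The modulus of a Gaussian kernel is again a Gaussian kernel, with the Hermitian part of
  \<open>A\<close>; so the integral of the modulus along one coordinate is the modulus of an integral.\<close>
lemma nn_integral_norm_gauss_kernel_insert:
  fixes A :: "'n \<Rightarrow> 'n \<Rightarrow> complex"
  assumes "finite I" "k \<notin> I" "re_posdef (insert k I) A"
  obtains S and C :: complex and p' q' where "re_posdef I S"
    and "\<And>v. (\<integral>\<^sup>+t. norm (gauss_kernel (insert k I) A p q (v(k := t))) \<partial>lborel)
               = ennreal (norm C * norm (gauss_kernel I S p' q' v))"
proof
  define H where "H = herm_part A"
  define m where "m i = (p i + q i) / 2" for i
  have H: "re_posdef (insert k I) H"
    using assms(3) by (simp add: H_def re_posdef_herm_part)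
  have "Re (H k k) > 0"
    using re_posdef_diag[OF _ H] assms(1) by simp
  note H_integral = has_bochner_integral_gauss_kernel_insert[where A=H and k=k and p=m and q=m, OF assms(1,2) this]
  have norm_eq: "gauss_kernel J H m m w = of_real (norm (gauss_kernel J A p q w))" for J w
    unfolding H_def m_def by (rule norm_gauss_kernel)
  show "re_posdef I (schur_compl H k)"
    using assms(1,2) H by (rule re_posdef_schur_compl)
  fix v
  have "(\<integral>\<^sup>+t. norm (gauss_kernel (insert k I) A p q (v(k := t))) \<partial>lborel)
      = (\<integral>\<^sup>+t. norm (gauss_kernel (insert k I) H m m (v(k := t))) \<partial>lborel)"
    by (simp add: norm_eq)
  also have "\<dots> = ennreal (norm (LINT t|lborel. gauss_kernel (insert k I) H m m (v(k := t))))"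
    using H_integral by (intro nn_integral_norm_eq_norm_integral) (auto simp: norm_eq has_bochner_integral_iff)
  finally show "(\<integral>\<^sup>+t. norm (gauss_kernel (insert k I) A p q (v(k := t))) \<partial>lborel)
      = ennreal (norm (pi / H k k * exp (cnj (m k) * m k / H k k))
                 * norm (gauss_kernel I (schur_compl H k) (schur_row H k m) (schur_col H k m) v))"
    using H_integral by (simp add: has_bochner_integral_iff norm_mult norm_divide)
qed

lemma integrable_gauss_kernel:
  fixes A :: "'n \<Rightarrow> 'n \<Rightarrow> complex"
  assumes "finite I" "re_posdef I A"
  shows "integrable (lborel_Pi I) (gauss_kernel I A p q)"
  using assms
proof (induction I arbitrary: A p q rule: finite_induct)
  case empty
  show ?case
    by (simp add: gauss_kernel_empty PiM_empty integrable_count_space)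
next
  case (insert k I)
  show ?case
  proof (rule nn_integral_norm_gauss_kernel_insert[OF insert.hyps insert.prems, of p q])
    fix S and C :: complex and p' q'
    assume S: "re_posdef I S" and fiber:
      "\<And>v. (\<integral>\<^sup>+t. norm (gauss_kernel (insert k I) A p q (v(k := t))) \<partial>lborel)
            = ennreal (norm C * norm (gauss_kernel I S p' q' v))"
    have measurable: "gauss_kernel (insert k I) A p q \<in> borel_measurable (lborel_Pi (insert k I))"
      "gauss_kernel I S p' q' \<in> borel_measurable (lborel_Pi I)"
      by (simp_all add: gauss_kernel_measurable)
    have "(\<integral>\<^sup>+w. norm (gauss_kernel (insert k I) A p q w) \<partial>lborel_Pi (insert k I))
        = (\<integral>\<^sup>+v. (\<integral>\<^sup>+t. norm (gauss_kernel (insert k I) A p q (v(k := t))) \<partial>lborel) \<partial>lborel_Pi I)"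
      by (rule product_lborel.product_nn_integral_insert[OF insert.hyps]) (use measurable in measurable)
    also have "\<dots> = ennreal (norm C) * (\<integral>\<^sup>+v. norm (gauss_kernel I S p' q' v) \<partial>lborel_Pi I)"
      unfolding fiber using measurable by (subst nn_integral_cmult[symmetric]) (auto simp: ennreal_mult)
    also have "\<dots> < \<infinity>"
      using insert.IH[OF S] unfolding integrable_iff_bounded by (simp add: ennreal_mult_less_top)
    finally show ?thesis
      using measurable unfolding integrable_iff_bounded by simp
  qed
qed

section \<open>The iterated Gaussian integral\<close>

definition pad_id :: "'n::finite set \<Rightarrow> ('n \<Rightarrow> 'n \<Rightarrow> complex) \<Rightarrow> complex^'n^'n" where
  "pad_id I A = (\<chi> i j. if i \<in> I \<and> j \<in> I then A i j else if i = j then 1 else 0)"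

lemma det_eq_1_if_rows_axis:
  fixes B :: "'a::field^'n::finite^'n"
  assumes "\<And>r. r \<noteq> k \<Longrightarrow> B $ r = axis r 1"
    and "B $ k = axis k 1 + (\<Sum>j\<in>I. d j *s axis j 1)" and "k \<notin> I"
  shows "det B = 1"
proof -
  have row_id: "row r (mat 1 :: 'a^'n^'n) = axis r 1" for r
    by (simp add: row_def mat_def axis_def vec_eq_iff)
  define x :: "'a^'n" where "x = (\<Sum>j\<in>I. d j *s axis j 1)"
  have B: "B = (\<chi> r. if r = k then row k (mat 1) + x else row r (mat 1))"
    using assms(1,2) by (auto simp: vec_eq_iff row_id x_def)
  have "x \<in> vec.span {row j (mat 1 :: 'a^'n^'n) |j. j \<noteq> k}"
    unfolding x_def using assms(3)
    by (intro vec.span_sum vec.span_scale vec.span_base) (auto simp: row_id)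
  then have "det B = det (mat 1 :: 'a^'n^'n)"
    unfolding B by (rule det_row_span)
  then show ?thesis
    by simp
qed

lemma row_operation_mult:
  fixes M :: "'a::comm_ring_1^'n::finite^'n"
  shows "(\<chi> i j. (if i = j then 1 else 0) + (if i \<in> I \<and> j = k then c i else 0)) ** M
       = (\<chi> i j. M$i$j + (if i \<in> I then c i * M$k$j else 0))"
proof -
  have "((if i = l then 1 else 0) + (if i \<in> I \<and> l = k then c i else 0)) * M$l$j
      = (if l = i then M$i$j else 0) + (if l = k then (if i \<in> I then c i * M$k$j else 0) else 0)" for i l j
    by (auto simp: algebra_simps)
  then show ?thesis
    by (simp add: matrix_matrix_mult_def vec_eq_iff sum.distrib)
qed

lemma column_operation_mult:
  fixes M :: "'a::comm_ring_1^'n::finite^'n"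
  shows "M ** (\<chi> i j. (if i = j then 1 else 0) + (if i = k \<and> j \<in> I then d j else 0))
       = (\<chi> i j. M$i$j + (if j \<in> I then M$i$k * d j else 0))"
proof -
  have "M$i$l * ((if l = j then 1 else 0) + (if l = k \<and> j \<in> I then d j else 0))
      = (if l = j then M$i$j else 0) + (if l = k then (if j \<in> I then M$i$k * d j else 0) else 0)" for i l j
    by (auto simp: algebra_simps)
  then show ?thesis
    by (simp add: matrix_matrix_mult_def vec_eq_iff sum.distrib)
qed

lemma det_row_operation_matrix:
  assumes "k \<notin> I"
  shows "det ((\<chi> i j. (if i = j then 1 else 0) + (if i \<in> I \<and> j = k then c i else 0)) :: 'a::field^'n::finite^'n) = 1"
proof -
  let ?L = "(\<chi> i j. (if i = j then 1 else 0) + (if i \<in> I \<and> j = k then c i else 0)) :: 'a^'n^'n"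
  have "det (transpose ?L) = 1"
    using assms
    by (intro det_eq_1_if_rows_axis[where k=k and I=I and d=c])
       (auto simp: transpose_def axis_def vec_eq_iff sum.delta if_distrib cong: if_cong)
  then show ?thesis
    by simp
qed

lemma det_column_operation_matrix:
  assumes "k \<notin> I"
  shows "det ((\<chi> i j. (if i = j then 1 else 0) + (if i = k \<and> j \<in> I then d j else 0)) :: 'a::field^'n::finite^'n) = 1"
  using assms
  by (intro det_eq_1_if_rows_axis[where k=k and I=I and d=d])
     (auto simp: axis_def vec_eq_iff sum.delta if_distrib cong: if_cong)

lemma diagonal_mult:
  fixes M :: "'a::semiring_1^'n::finite^'n"
  shows "(\<chi> i j. if i = j then e i else 0) ** M = (\<chi> i j. e i * M$i$j)"
proof -
  have "(if i = l then e i else 0) * M$l$j = (if l = i then e i * M$i$j else 0)" for i l j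
    by auto
  then show ?thesis
    by (simp add: matrix_matrix_mult_def vec_eq_iff)
qed

lemma det_pad_id_insert:
  fixes A :: "'n::finite \<Rightarrow> 'n \<Rightarrow> complex"
  assumes "k \<notin> I" "A k k \<noteq> 0"
  shows "det (pad_id (insert k I) A) = A k k * det (pad_id I (schur_compl A k))"
proof -
  define c where "c i = - A i k / A k k" for i
  define d where "d j = - A k j / A k k" for j
  let ?L = "(\<chi> i j. (if i = j then 1 else 0) + (if i \<in> I \<and> j = k then c i else 0)) :: complex^'n^'n"
  let ?U = "(\<chi> i j. (if i = j then 1 else 0) + (if i = k \<and> j \<in> I then d j else 0)) :: complex^'n^'n"
  let ?D = "(\<chi> i j. if i = j then (if i = k then A k k else 1) else 0) :: complex^'n^'n"
  have "?L ** pad_id (insert k I) A ** ?U = ?D ** pad_id I (schur_compl A k)"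
    unfolding row_operation_mult column_operation_mult diagonal_mult
    using assms by (auto simp: vec_eq_iff pad_id_def schur_compl_def c_def d_def field_simps)
  moreover have "det (?L ** pad_id (insert k I) A ** ?U) = det (pad_id (insert k I) A)"
    using det_row_operation_matrix[OF assms(1), of c] det_column_operation_matrix[OF assms(1), of d]
    by (simp add: det_mul)
  moreover have "det ?D = A k k"
    by (subst det_diagonal) (auto simp: prod.delta)
  ultimately show ?thesis
    by (simp add: det_mul)
qed

lemma integral_gauss_kernel:
  fixes A :: "'n::finite \<Rightarrow> 'n \<Rightarrow> complex"
  assumes "finite I" "re_posdef I A" "\<forall>i\<in>I. (\<Sum>j\<in>I. A i j * y j) = q i"
  shows "(LINT v|lborel_Pi I. gauss_kernel I A p q v) = pi ^ card I / det (pad_id I A) * exp (lform I p y)"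
  using assms
proof (induction I arbitrary: A p q rule: finite_induct)
  case empty
  have "pad_id {} A = mat 1"
    by (simp add: pad_id_def mat_def vec_eq_iff)
  then show ?case
    by (simp add: gauss_kernel_empty PiM_empty lform_def)
next
  case (insert k I)
  have "Re (A k k) > 0"
    using re_posdef_diag[OF _ insert.prems(1)] insert.hyps by simp
  then have "A k k \<noteq> 0"
    by auto
  have schur_solution: "\<forall>i\<in>I. (\<Sum>j\<in>I. schur_compl A k i j * y j) = schur_col A k q i"
    using insert.hyps \<open>A k k \<noteq> 0\<close> insert.prems(2) by (rule schur_compl_solution)
  have "integrable (lborel_Pi (insert k I)) (gauss_kernel (insert k I) A p q)"
    using insert by (intro integrable_gauss_kernel) auto
  then have "(LINT w|lborel_Pi (insert k I). gauss_kernel (insert k I) A p q w)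
      = (LINT v|lborel_Pi I. LINT t|lborel. gauss_kernel (insert k I) A p q (v(k := t)))"
    by (rule product_lborel.product_integral_insert[OF insert.hyps])
  also have "\<dots> = (LINT v|lborel_Pi I. pi / A k k * exp (cnj (p k) * q k / A k k)
      * gauss_kernel I (schur_compl A k) (schur_row A k p) (schur_col A k q) v)"
    using has_bochner_integral_gauss_kernel_insert[where A=A, OF insert.hyps \<open>Re (A k k) > 0\<close>]
    by (simp add: has_bochner_integral_iff)
  also have "\<dots> = pi / A k k * exp (cnj (p k) * q k / A k k)
      * (pi ^ card I / det (pad_id I (schur_compl A k)) * exp (lform I (schur_row A k p) y))"
    using insert.IH[OF re_posdef_schur_compl[OF insert.hyps insert.prems(1)] schur_solution] by simp
  also have "\<dots> = pi ^ card (insert k I) / det (pad_id (insert k I) A) * exp (lform (insert k I) p y)"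
  proof -
    have "cnj (p k) * q k / A k k + lform I (schur_row A k p) y = lform (insert k I) p y"
      using insert.hyps \<open>A k k \<noteq> 0\<close> insert.prems(2) by (intro lform_schur_row_solution) auto
    then show ?thesis
      using insert.hyps \<open>A k k \<noteq> 0\<close>
      by (simp add: det_pad_id_insert exp_add[symmetric] divide_simps)
  qed
  finally show ?case .
qed

section \<open>Gaussian integrals on \<open>complex^'n\<close>\<close>

lemma vec_nth_measurable [measurable]: "(\<lambda>x::'a::euclidean_space^'n::finite. x $ i) \<in> borel_measurable borel"
  by (intro borel_measurable_continuous_onI linear_continuous_on bounded_linear_vec_nth)

lemma prod_Basis_vec:
  fixes f :: "'a::euclidean_space^'n::finite \<Rightarrow> 'c::comm_monoid_mult"
  shows "(\<Prod>b\<in>Basis. f b) = (\<Prod>i\<in>UNIV. \<Prod>u\<in>Basis. f (axis i u))"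
proof -
  have "(\<Prod>b\<in>(Basis :: ('a^'n) set). f b) = (\<Prod>b\<in>(\<Union>i. axis i ` Basis). f b)"
    by (simp add: Basis_vec_def image_def) (intro prod.cong refl, auto)
  also have "\<dots> = (\<Prod>i\<in>UNIV. \<Prod>b\<in>axis i ` Basis. f b)"
    by (rule prod.UNION_disjoint) (auto simp: axis_eq_axis)
  also have "\<dots> = (\<Prod>i\<in>UNIV. \<Prod>u\<in>Basis. f (axis i u))"
    by (intro prod.cong refl, subst prod.reindex) (auto simp: inj_on_def axis_eq_axis)
  finally show ?thesis .
qed

lemma vec_lambda_measurable:
  "(vec_lambda :: ('n::finite \<Rightarrow> complex) \<Rightarrow> complex^'n) \<in> borel_measurable (lborel_Pi UNIV)"
proof -
  have "continuous_on UNIV (\<lambda>x::complex. if j = i then x else 0)" for i j :: 'n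
    by (cases "j = i") auto
  then have [measurable]: "axis i \<in> borel_measurable (borel :: complex measure)" for i :: 'n
    unfolding axis_def by (intro borel_measurable_continuous_onI continuous_on_vec_lambda)
  have [measurable]: "(\<lambda>v. v i) \<in> borel_measurable (lborel_Pi UNIV)" for i :: 'n
    using measurable_component_singleton[of i UNIV] by auto
  have "vec_lambda = (\<lambda>f. \<Sum>i\<in>UNIV. axis i (f i) :: complex^'n)"
    by (simp add: fun_eq_iff vec_eq_iff axis_def sum.delta if_distrib cong: if_cong)
  also have "\<dots> \<in> borel_measurable (lborel_Pi UNIV)"
    by measurable
  finally show ?thesis .
qed

lemma lborel_vec_eq_distr: "(lborel :: (complex^'n::finite) measure) = distr (lborel_Pi UNIV) borel vec_lambda"
proof (rule lborel_eqI)
  fix l u :: "complex^'n"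
  assume le: "\<And>b. b \<in> Basis \<Longrightarrow> l \<bullet> b \<le> u \<bullet> b"
  have le_i: "\<forall>c\<in>Basis. l$i \<bullet> c \<le> u$i \<bullet> c" for i
    using le[of "axis i _"] by (auto simp: Basis_vec_def inner_axis)
  have "vec_lambda -` box l u \<inter> space (lborel_Pi UNIV) = (\<Pi>\<^sub>E i\<in>UNIV. box (l$i) (u$i))"
    by (auto simp: space_PiM mem_box Basis_vec_def inner_axis PiE_def Pi_def)
  then have "emeasure (distr (lborel_Pi UNIV) borel vec_lambda) (box l u)
      = emeasure (lborel_Pi UNIV) (\<Pi>\<^sub>E i\<in>UNIV. box (l$i) (u$i))"
    by (subst emeasure_distr[OF vec_lambda_measurable]) auto
  also have "\<dots> = (\<Prod>i\<in>UNIV. emeasure lborel (box (l$i) (u$i)))"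
    by (rule product_lborel.emeasure_PiM) auto
  also have "\<dots> = (\<Prod>i\<in>UNIV. ennreal (\<Prod>c\<in>Basis. (u$i - l$i) \<bullet> c))"
    using le_i by (intro prod.cong refl) (simp add: emeasure_lborel_box_eq)
  also have "\<dots> = ennreal (\<Prod>i\<in>UNIV. \<Prod>c\<in>Basis. (u$i - l$i) \<bullet> c)"
    using le_i by (intro prod_ennreal) (auto intro!: prod_nonneg simp: inner_diff_left)
  also have "(\<Prod>i\<in>UNIV. \<Prod>c\<in>Basis. (u$i - l$i) \<bullet> c) = (\<Prod>b\<in>Basis. (u - l) \<bullet> b)"
    by (simp add: prod_Basis_vec inner_axis)
  finally show "emeasure (distr (lborel_Pi UNIV) borel vec_lambda) (box l u) = (\<Prod>b\<in>Basis. (u - l) \<bullet> b)" .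
qed simp

lemma has_bochner_integral_lborel_vec_iff:
  fixes F :: "complex^'n::finite \<Rightarrow> complex"
  assumes "F \<in> borel_measurable borel"
  shows "has_bochner_integral lborel F x \<longleftrightarrow> has_bochner_integral (lborel_Pi UNIV) (\<lambda>f. F (vec_lambda f)) x"
  unfolding has_bochner_integral_iff lborel_vec_eq_distr
  using integrable_distr_eq[OF vec_lambda_measurable assms] integral_distr[OF vec_lambda_measurable assms]
  by simp

lemma herm_eq_qform: "herm v (A *v v) = qform UNIV (\<lambda>i j. A$i$j) (vec_nth v)"
  unfolding herm_def qform_def by (simp add: matrix_vector_mult_def sum_distrib_left mult.assoc)

lemma herm_eq_lform: "herm w v = lform UNIV (vec_nth w) (vec_nth v)"
  unfolding herm_def lform_def ..

lemma pad_id_UNIV: "pad_id UNIV (\<lambda>i j. A$i$j) = A"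
  by (simp add: pad_id_def vec_eq_iff)

lemma has_bochner_integral_gaussian_vec:
  fixes A :: "complex^'n::finite^'n" and p q y :: "complex^'n"
  assumes pos: "\<And>v. v \<noteq> 0 \<Longrightarrow> Re (herm v (A *v v)) > 0" and "A *v y = q"
  shows "has_bochner_integral lborel (\<lambda>v. exp (- herm v (A *v v) + herm p v + herm v q))
           (pi ^ CARD('n) / det A * exp (herm p y))"
proof -
  let ?A = "\<lambda>i j. A$i$j"
  let ?G = "gauss_kernel UNIV ?A (vec_nth p) (vec_nth q)"
  have "re_posdef UNIV ?A"
    unfolding re_posdef_def
  proof (intro allI impI)
    fix f :: "'n \<Rightarrow> complex"
    assume "\<exists>i\<in>UNIV. f i \<noteq> 0"
    then have "vec_lambda f \<noteq> 0"
      by (auto simp: vec_eq_iff)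
    from pos[OF this] show "Re (qform UNIV ?A f) > 0"
      by (simp add: herm_eq_qform vec_lambda_inverse)
  qed
  moreover have "\<forall>i\<in>UNIV. (\<Sum>j\<in>UNIV. A$i$j * y$j) = q$i"
    using \<open>A *v y = q\<close> by (auto simp: matrix_vector_mult_def vec_eq_iff)
  ultimately have "has_bochner_integral (lborel_Pi UNIV) ?G (pi ^ CARD('n) / det A * exp (herm p y))"
    by (simp add: has_bochner_integral_iff integrable_gauss_kernel integral_gauss_kernel
        pad_id_UNIV herm_eq_lform)
  moreover have "(\<lambda>v. ?G (vec_nth v)) \<in> borel_measurable borel"
    unfolding gauss_kernel_def qform_def lform_def by measurable
  ultimately have "has_bochner_integral lborel (\<lambda>v. ?G (vec_nth v)) (pi ^ CARD('n) / det A * exp (herm p y))"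
    by (simp add: has_bochner_integral_lborel_vec_iff vec_lambda_inverse)
  then show ?thesis
    unfolding herm_eq_qform by (simp only: gauss_kernel_def herm_eq_lform)
qed

section \<open>Convolution of the functions \<open>gammaX\<close>\<close>

lemma herm_diff_left: "herm (u - v) w = herm u w - herm v w"
  unfolding herm_def by (simp add: sum_subtractf ring_distribs)

lemma herm_diff_right: "herm u (v - w) = herm u v - herm u w"
  unfolding herm_def by (simp add: sum_subtractf ring_distribs)

lemma herm_add_right: "herm u (v + w) = herm u v + herm u w"
  unfolding herm_def by (simp add: sum.distrib ring_distribs)

lemma herm_scaleR_left: "herm (r *\<^sub>R v) w = of_real r * herm v w"
  unfolding herm_def vector_scaleR_component by (simp add: scaleR_conv_of_real sum_distrib_left mult.assoc)

lemma herm_scaleR_right: "herm v (r *\<^sub>R w) = of_real r * herm v w"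
  unfolding herm_def vector_scaleR_component by (simp add: scaleR_conv_of_real sum_distrib_left mult.left_commute)

lemma herm_swap: "herm w v = cnj (herm v w)"
  unfolding herm_def by (simp add: mult.commute)

lemma herm_self: "herm v v = of_real ((norm v)\<^sup>2)"
proof -
  have "cnj (v$i) * v$i = of_real ((norm (v$i))\<^sup>2)" for i
    by (subst complex_norm_square) (rule mult.commute)
  moreover have "(norm v)\<^sup>2 = (\<Sum>i\<in>UNIV. (norm (v$i))\<^sup>2)"
    by (simp add: norm_vec_def L2_set_def sum_nonneg)
  ultimately show ?thesis
    unfolding herm_def by (simp only: of_real_sum)
qed

lemma herm_adj_left: "herm (adj M *v u) v = herm u (M *v v)"
proof -
  have "herm (adj M *v u) v = (\<Sum>i\<in>UNIV. \<Sum>j\<in>UNIV. cnj (u$j) * M$j$i * v$i)"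
    unfolding herm_def adj_def matrix_vector_mult_def by (simp add: sum_distrib_left sum_distrib_right mult_ac)
  also have "\<dots> = (\<Sum>j\<in>UNIV. \<Sum>i\<in>UNIV. cnj (u$j) * M$j$i * v$i)"
    by (rule sum.swap)
  also have "\<dots> = herm u (M *v v)"
    unfolding herm_def matrix_vector_mult_def by (simp add: sum_distrib_left mult_ac)
  finally show ?thesis .
qed

lemma adj_sgnmat: "adj (sgnmat P) = sgnmat P"
  by (simp add: adj_def sgnmat_def vec_eq_iff)

lemma scaleR_matrix_vector_mult: "(r *\<^sub>R M) *v v = r *\<^sub>R (M *v v :: complex^'n::finite)"
  by (simp add: vec_eq_iff matrix_vector_mult_def scaleR_sum_right)

lemma det_scaleR: "det (r *\<^sub>R A) = of_real r ^ CARD('n) * det (A :: complex^'n::finite^'n)"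
proof -
  have "r *\<^sub>R A = (\<chi> i. of_real r *s A$i)"
    by (simp add: vec_eq_iff) (simp add: scaleR_conv_of_real)
  then show ?thesis
    using det_rows_mul[of "\<lambda>_. of_real r" "\<lambda>i. A$i"] by simp
qed

lemma zeta_plus_re_herm_pos:
  assumes "X \<in> zeta_plus P" "v \<noteq> 0"
  shows "Re (herm v (X *v v)) > 0"
proof -
  have "herm v (adj X *v v) = cnj (herm v (X *v v))"
    using herm_swap[of v "adj X *v v"] herm_adj_left[of X v v] by simp
  then have "herm v (((1/2) *\<^sub>R (X + adj X)) *v v) = of_real (1/2) * (herm v (X *v v) + cnj (herm v (X *v v)))"
    by (simp only: scaleR_matrix_vector_mult herm_scaleR_right matrix_vector_mult_add_rdistrib herm_add_right)
  also have "\<dots> = of_real (Re (herm v (X *v v)))"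
    by (simp add: complex_add_cnj)
  finally have "herm v (((1/2) *\<^sub>R (X + adj X)) *v v) = of_real (Re (herm v (X *v v)))" .
  moreover have "Re (herm v (((1/2) *\<^sub>R (X + adj X)) *v v)) > 0"
    using assms unfolding zeta_plus_def posdef_def by blast
  ultimately show ?thesis
    by simp
qed

lemma invertible_if_re_herm_pos:
  fixes Z :: "complex^'n::finite^'n"
  assumes "\<And>v. v \<noteq> 0 \<Longrightarrow> Re (herm v (Z *v v)) > 0"
  shows "invertible Z"
proof -
  have "v = 0" if "Z *v v = 0" for v
    using assms[of v] that by (auto simp: herm_def)
  then show ?thesis
    by (simp add: invertible_left_inverse matrix_left_invertible_ker)
qed

lemma zeta_plus_add_re_herm_pos:
  assumes "X \<in> zeta_plus P" "Y \<in> zeta_plus P" "v \<noteq> 0"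
  shows "Re (herm v ((X + Y) *v v)) > 0"
  using zeta_plus_re_herm_pos[OF assms(1,3)] zeta_plus_re_herm_pos[OF assms(2,3)]
  by (simp add: matrix_vector_mult_add_rdistrib herm_add_right)

lemma zeta_plus_add_invertible:
  assumes "X \<in> zeta_plus P" "Y \<in> zeta_plus P"
  shows "invertible (X + Y)"
  by (rule invertible_if_re_herm_pos, rule zeta_plus_add_re_herm_pos[OF assms])

lemma matrix_inv_mult:
  fixes A :: "'a::semiring_1^'n^'n"
  assumes "invertible A"
  shows "A ** matrix_inv A = mat 1" "matrix_inv A ** A = mat 1"
  using assms unfolding matrix_inv_def invertible_def by (metis (mono_tags, lifting) someI_ex)+

lemma vol_norm_eq: "vol_norm TYPE('n::finite) = (2 * pi) ^ CARD('n)"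
proof -
  let ?A = "(1/2) *\<^sub>R mat 1 :: complex^'n^'n"
  have herm_A: "herm v (?A *v v) = herm v v / 2" for v
    by (simp add: scaleR_matrix_vector_mult herm_scaleR_right)
  have "v \<noteq> 0 \<Longrightarrow> Re (herm v (?A *v v)) > 0" for v
    by (simp add: herm_A herm_self)
  moreover have "herm 0 v = 0" "herm v 0 = 0" for v :: "complex^'n"
    by (simp_all add: herm_def)
  ultimately have "has_bochner_integral lborel (\<lambda>v::complex^'n. exp (- (1/2) * herm v v)) ((2 * pi) ^ CARD('n))"
    using has_bochner_integral_gaussian_vec[of ?A 0 0 0]
    by (simp add: herm_A det_scaleR power_divide power_mult_distrib field_simps)
  then show ?thesis
    by (simp add: vol_norm_def has_bochner_integral_iff)
qed

lemma gammaX_integrand_eq_gaussian: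
  fixes X Y :: "complex^'n::finite^'n" and P :: "'n set"
  defines "s \<equiv> sgnmat P"
  shows "gammaX P X (u - v) * gammaX P Y v * exp (- \<i> * complex_of_real (Im (herm u (s *v v))))
    = det (X + s) * det (Y + s) * exp (- (1/2) * herm u (X *v u))
      * exp (- herm v (((1/2) *\<^sub>R (X + Y)) *v v) + herm ((1/2) *\<^sub>R (adj (X - s) *v u)) v
             + herm v ((1/2) *\<^sub>R ((X + s) *v u)))"
proof -
  have "herm v (s *v u) = cnj (herm u (s *v v))"
    using herm_adj_left[of s v u] herm_swap[of "s *v v" u] by (simp add: s_def adj_sgnmat)
  moreover have "\<i> * complex_of_real (Im z) = (z - cnj z) / 2" for z
    by (simp add: complex_eq_iff)
  ultimately have Im_eq: "\<i> * complex_of_real (Im (herm u (s *v v))) = (herm u (s *v v) - herm v (s *v u)) / 2"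
    by simp
  let ?r = "- herm v (((1/2) *\<^sub>R (X + Y)) *v v) + herm ((1/2) *\<^sub>R (adj (X - s) *v u)) v
             + herm v ((1/2) *\<^sub>R ((X + s) *v u))"
  have "- (1/2) * herm (u - v) (X *v (u - v)) + - (1/2) * herm v (Y *v v)
        + - \<i> * complex_of_real (Im (herm u (s *v v))) = - (1/2) * herm u (X *v u) + ?r"
    unfolding mult_minus_left Im_eq
    by (simp add: herm_diff_left herm_diff_right herm_add_right herm_scaleR_left herm_scaleR_right
        herm_adj_left scaleR_matrix_vector_mult matrix_vector_mult_diff_distrib
        matrix_vector_mult_add_rdistrib matrix_vector_mult_diff_rdistrib field_simps)
  then have "exp (- (1/2) * herm (u - v) (X *v (u - v))) * exp (- (1/2) * herm v (Y *v v))
        * exp (- \<i> * complex_of_real (Im (herm u (s *v v)))) = exp (- (1/2) * herm u (X *v u)) * exp ?r"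
    by (simp only: exp_add[symmetric])
  then show ?thesis
    unfolding gammaX_def s_def[symmetric] by (simp only: mult_ac)
qed

lemma gammaX_circ:
  fixes X Y :: "complex^'n::finite^'n"
  assumes "invertible (X + Y)" and "(X + Y) *v w = (X + sgnmat P) *v u"
  shows "gammaX P (circ P X Y) u = det (X + sgnmat P) * det (Y + sgnmat P) / det (X + Y)
           * exp (- (1/2) * herm u (X *v u) + herm u ((X - sgnmat P) *v w) / 2)"
proof -
  let ?s = "sgnmat P" and ?M = "matrix_inv (X + Y)"
  note inv = matrix_inv_mult[OF assms(1)]
  then have "?M *v ((X + ?s) *v u) = w"
    using assms(2) by (metis matrix_vector_mul_assoc matrix_vector_mul_lid)
  then have "circ P X Y *v u = (Y + ?s) *v w - ?s *v u"
    by (simp add: circ_def matrix_vector_mult_diff_rdistrib matrix_vector_mul_assoc[symmetric])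
  also have "\<dots> = X *v u - (X - ?s) *v w"
    using assms(2) by (simp add: matrix_vector_mult_add_rdistrib matrix_vector_mult_diff_rdistrib algebra_simps)
  finally have circ_u: "circ P X Y *v u = X *v u - (X - ?s) *v w" .
  have "inverse (det (X + Y)) = det ?M"
    using inv by (metis det_I det_mul inverse_unique)
  then have "det (circ P X Y + ?s) = det (X + ?s) * det (Y + ?s) / det (X + Y)"
    by (simp add: circ_def det_mul divide_inverse)
  moreover have "- (1/2) * herm u (circ P X Y *v u) = - (1/2) * herm u (X *v u) + herm u ((X - ?s) *v w) / 2"
    unfolding circ_u herm_diff_right by (simp add: field_simps)
  ultimately show ?thesis
    by (simp only: gammaX_def)
qed

lemma has_bochner_integral_gammaX_product:
  fixes X Y :: "complex^'n::finite^'n"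
  assumes "X \<in> zeta_plus P" "Y \<in> zeta_plus P" and w: "(X + Y) *v w = (X + sgnmat P) *v u"
  shows "has_bochner_integral lborel
    (\<lambda>v. gammaX P X (u - v) * gammaX P Y v * exp (- \<i> * complex_of_real (Im (herm u (sgnmat P *v v)))))
    ((2 * pi) ^ CARD('n) * (det (X + sgnmat P) * det (Y + sgnmat P) / det (X + Y)
       * exp (- (1/2) * herm u (X *v u) + herm u ((X - sgnmat P) *v w) / 2)))"
proof -
  define s where "s = sgnmat P"
  define A where "A = (1/2) *\<^sub>R (X + Y)"
  define p where "p = (1/2) *\<^sub>R (adj (X - s) *v u)"
  define q where "q = (1/2) *\<^sub>R ((X + s) *v u)"
  define K where "K = det (X + s) * det (Y + s) * exp (- (1/2) * herm u (X *v u))"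
  have "has_bochner_integral lborel (\<lambda>v. exp (- herm v (A *v v) + herm p v + herm v q))
      (pi ^ CARD('n) / det A * exp (herm p w))"
    by (rule has_bochner_integral_gaussian_vec) (use zeta_plus_add_re_herm_pos[OF assms(1,2)] w
       in \<open>simp_all add: A_def q_def s_def scaleR_matrix_vector_mult herm_scaleR_right\<close>)
  then have integral: "has_bochner_integral lborel
      (\<lambda>v. gammaX P X (u - v) * gammaX P Y v * exp (- \<i> * complex_of_real (Im (herm u (sgnmat P *v v)))))
      (K * (pi ^ CARD('n) / det A * exp (herm p w)))"
    unfolding gammaX_integrand_eq_gaussian K_def A_def p_def q_def s_def by (rule has_bochner_integral_mult_right)
  have "det (X + Y) \<noteq> 0"
    using zeta_plus_add_invertible[OF assms(1,2)] by (simp add: invertible_det_nz)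
  moreover have det_A: "det A = (1/2) ^ CARD('n) * det (X + Y)"
    unfolding A_def det_scaleR by simp
  moreover have herm_pw: "herm p w = herm u ((X - s) *v w) / 2"
    unfolding p_def herm_scaleR_left herm_adj_left by simp
  ultimately show ?thesis
    using integral unfolding det_A herm_pw K_def s_def exp_add
    by (simp add: power_divide power_mult_distrib field_simps)
qed

theorem mainTheorem14:
  fixes P :: "'n::finite set" and X Y :: "complex^'n^'n" and u :: "complex^'n"
  assumes "X \<in> zeta_plus P" and "Y \<in> zeta_plus P"
  shows "integrable (lborel :: (complex^'n) measure)
           (\<lambda>v. gammaX P X (u - v) * gammaX P Y v
                 * exp (- \<i> * complex_of_real (Im (herm u (sgnmat P *v v)))))
    \<and> (LINT v|lborel. gammaX P X (u - v) * gammaX P Y v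
                 * exp (- \<i> * complex_of_real (Im (herm u (sgnmat P *v v))))) / vol_norm TYPE('n)
      = gammaX P (circ P X Y) u"
proof -
  define w where "w = matrix_inv (X + Y) *v ((X + sgnmat P) *v u)"
  have inv: "invertible (X + Y)"
    using assms by (rule zeta_plus_add_invertible)
  then have w: "(X + Y) *v w = (X + sgnmat P) *v u"
    by (simp add: w_def matrix_vector_mul_assoc matrix_mul_assoc matrix_inv_mult)
  show ?thesis
    using has_bochner_integral_gammaX_product[OF assms w] gammaX_circ[OF inv w]
    by (simp add: has_bochner_integral_iff vol_norm_eq)
qed

end
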